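(* Assume the network $\Sigma$ is well-posed, let $\mathcal{A}\subset X$ be nonempty and closed, and suppose $\Sigma$ is eISS with respect to $\mathcal{A}$ with constants $\rho\in[0,1)$, $C\ge1$ and gain $\gamma\in\mathcal{K}$, i.e. $|x(k,\xi,u)|_{\mathcal{A}}\le\max\{C\rho^k|\xi|_{\mathcal{A}},\gamma(\|u\|_\infty)\}$ for all $\xi\in X$, $u\in\mathcal{U}$, $k\in\mathbb{N}_0$. Then for any function $V:X\to[0,\infty)$ and constants $\underline w,\overline w,b>0$ satisfying $\underline w|\xi|_{\mathcal{A}}^b\le V(\xi)\le\overline w|\xi|_{\mathcal{A}}^b$ for all $\xi\in X$, and for every $\kappa\in(0,1)$, there exists $M\in\mathbb{N}$ such that $V(x(M,\xi,u))\le\max\{\kappa V(\xi),\overline w\,\gamma(\|u\|_\infty)^b\}$ for all $\xi\in X$ and all $u\in\mathcal{U}$. In particular, one can choose any $M\in\mathbb{N}$ satisfying $M\ge\frac1b\log_\rho\big(\frac{\kappa\underline w}{C^b\overline w}\big)$, and $V$ is an exponential $M$-step ISS Lyapunov function for $\Sigma$.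
   Context: Setting: for each $i\in\mathbb{N}$ fix positive integers $n_i,p_i$, norms on $\mathbb{R}^{n_i},\mathbb{R}^{p_i}$, a finite $I_i\subset\mathbb{N}\setminus\{i\}$ with each $\{j: i\in I_j\}$ finite, and continuous $f_i:\mathbb{R}^{n_i}\times\prod_{j\in I_i}\mathbb{R}^{n_j}\times\mathbb{R}^{p_i}\to\mathbb{R}^{n_i}$. $X$ (resp. $U$) is the space of sequences $(x_i)$, $x_i\in\mathbb{R}^{n_i}$ (resp. $(u_i)$, $u_i\in\mathbb{R}^{p_i}$) with finite sup-norm $|\cdot|_\infty$; $f(x,u)_i=f_i(x_i,(x_j)_{j\in I_i},u_i)$; network $\Sigma$: $x(k+1)=f(x(k),u(k))$; well-posed means $f(X\times U)\subset X$. $\mathcal{U}$: sequences $u:\mathbb{N}_0\to U$ with $\|u\|_\infty=\sup_k|u(k)|_\infty<\infty$; $x(k,\xi,u)$ the solution with $x(0)=\xi$. $|x|_{\mathcal{A}}=\inf_{y\in\mathcal{A}}|x-y|_\infty$. An exponential (eISS) $M$-step ISS Lyapunov function is a function $V$ with $\underline w|\xi|_{\mathcal{A}}^b\le V(\xi)\le\overline w|\xi|_{\mathcal{A}}^b$ and $V(x(M,\xi,u))\le\max\{\kappa V(\xi),\tilde\gamma(\|u\|_\infty)\}$ for some $\kappa\in[0,1)$, $\tilde\gamma\in\mathcal{K}$, all $\xi\in X,u\in\mathcal{U}$. $\mathcal{K}$ denotes continuous strictly increasing functions $[0,\infty)\to[0,\infty)$ vanishing at $0$. *)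

theory Defs
  imports "HOL-Analysis.Analysis"
begin

text \<open>
  A vector of R^m is a function nat => real vanishing at all indices >= m.
  A network state (resp. input) is a sequence of such vectors: nat => nat => real,
  where x i is the i-th component x_i in R^(n i) (resp. u_i in R^(p i)).
\<close>

type_synonym vec = "nat \<Rightarrow> real"
type_synonym seqv = "nat \<Rightarrow> nat \<Rightarrow> real"

definition Vec :: "nat \<Rightarrow> vec set" where
  "Vec m = {v. \<forall>j\<ge>m. v j = 0}"

definition is_norm_on :: "nat \<Rightarrow> (vec \<Rightarrow> real) \<Rightarrow> bool" where
  "is_norm_on m N \<longleftrightarrow>
     (\<forall>v\<in>Vec m. 0 \<le> N v \<and> (N v = 0 \<longleftrightarrow> v = (\<lambda>j. 0))) \<and>
     (\<forall>v\<in>Vec m. \<forall>c::real. N (\<lambda>j. c * v j) = \<bar>c\<bar> * N v) \<and>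
     (\<forall>v\<in>Vec m. \<forall>w\<in>Vec m. N (\<lambda>j. v j + w j) \<le> N v + N w)"

definition supnorm :: "(nat \<Rightarrow> vec \<Rightarrow> real) \<Rightarrow> seqv \<Rightarrow> real" where
  "supnorm N x = (SUP i. N i (x i))"

definition seqspace :: "(nat \<Rightarrow> nat) \<Rightarrow> (nat \<Rightarrow> vec \<Rightarrow> real) \<Rightarrow> seqv set" where
  "seqspace d N = {x. (\<forall>i. x i \<in> Vec (d i)) \<and> bdd_above (range (\<lambda>i. N i (x i)))}"

definition allseq :: "(nat \<Rightarrow> nat) \<Rightarrow> seqv set" where
  "allseq d = {x. \<forall>i. x i \<in> Vec (d i)}"

text \<open>F i x u represents f_i(x_i, (x_j)_{j in I_i}, u_i): it only depends on these
  arguments, and is continuous (in the finitely many relevant coordinates, i.e.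
  w.r.t. the product topology).\<close>
definition network_data ::
  "(nat \<Rightarrow> nat) \<Rightarrow> (nat \<Rightarrow> nat) \<Rightarrow> (nat \<Rightarrow> vec \<Rightarrow> real) \<Rightarrow> (nat \<Rightarrow> vec \<Rightarrow> real)
   \<Rightarrow> (nat \<Rightarrow> nat set) \<Rightarrow> (nat \<Rightarrow> seqv \<Rightarrow> seqv \<Rightarrow> vec) \<Rightarrow> bool" where
  "network_data n p Nx Nu I F \<longleftrightarrow>
     (\<forall>i. 0 < n i \<and> 0 < p i) \<and>
     (\<forall>i. is_norm_on (n i) (Nx i) \<and> is_norm_on (p i) (Nu i)) \<and>
     (\<forall>i. finite (I i) \<and> i \<notin> I i \<and> finite {j. i \<in> I j}) \<and>
     (\<forall>i x x' u u'. x i = x' i \<and> (\<forall>j\<in>I i. x j = x' j) \<and> u i = u' i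
         \<longrightarrow> F i x u = F i x' u') \<and>
     (\<forall>i. \<forall>x\<in>allseq n. \<forall>u\<in>allseq p. F i x u \<in> Vec (n i)) \<and>
     (\<forall>i. continuous_on (allseq n \<times> allseq p) (\<lambda>(x, u). F i x u))"

definition netmap :: "(nat \<Rightarrow> seqv \<Rightarrow> seqv \<Rightarrow> vec) \<Rightarrow> seqv \<Rightarrow> seqv \<Rightarrow> seqv" where
  "netmap F x u = (\<lambda>i. F i x u)"

definition well_posed ::
  "(nat \<Rightarrow> nat) \<Rightarrow> (nat \<Rightarrow> nat) \<Rightarrow> (nat \<Rightarrow> vec \<Rightarrow> real) \<Rightarrow> (nat \<Rightarrow> vec \<Rightarrow> real)
   \<Rightarrow> (nat \<Rightarrow> seqv \<Rightarrow> seqv \<Rightarrow> vec) \<Rightarrow> bool" where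
  "well_posed n p Nx Nu F \<longleftrightarrow>
     (\<forall>x\<in>seqspace n Nx. \<forall>u\<in>seqspace p Nu. netmap F x u \<in> seqspace n Nx)"

definition inputs :: "(nat \<Rightarrow> nat) \<Rightarrow> (nat \<Rightarrow> vec \<Rightarrow> real) \<Rightarrow> (nat \<Rightarrow> seqv) set" where
  "inputs p Nu = {u. (\<forall>k. u k \<in> seqspace p Nu) \<and> bdd_above (range (\<lambda>k. supnorm Nu (u k)))}"

definition inorm :: "(nat \<Rightarrow> vec \<Rightarrow> real) \<Rightarrow> (nat \<Rightarrow> seqv) \<Rightarrow> real" where
  "inorm Nu u = (SUP k. supnorm Nu (u k))"

primrec traj :: "(nat \<Rightarrow> seqv \<Rightarrow> seqv \<Rightarrow> vec) \<Rightarrow> seqv \<Rightarrow> (nat \<Rightarrow> seqv) \<Rightarrow> nat \<Rightarrow> seqv" where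
  "traj F \<xi> u 0 = \<xi>"
| "traj F \<xi> u (Suc k) = netmap F (traj F \<xi> u k) (u k)"

definition distA :: "(nat \<Rightarrow> vec \<Rightarrow> real) \<Rightarrow> seqv set \<Rightarrow> seqv \<Rightarrow> real" where
  "distA N A x = (INF y\<in>A. supnorm N (\<lambda>i j. x i j - y i j))"

definition closed_in_X :: "(nat \<Rightarrow> nat) \<Rightarrow> (nat \<Rightarrow> vec \<Rightarrow> real) \<Rightarrow> seqv set \<Rightarrow> bool" where
  "closed_in_X n N A \<longleftrightarrow>
     (\<forall>y x. (\<forall>k. y k \<in> A) \<and> x \<in> seqspace n N \<and>
        ((\<lambda>k. supnorm N (\<lambda>i j. y k i j - x i j)) \<longlonglongrightarrow> 0) \<longrightarrow> x \<in> A)"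

definition classK :: "(real \<Rightarrow> real) \<Rightarrow> bool" where
  "classK g \<longleftrightarrow> continuous_on {0..} g \<and> strict_mono_on {0..} g \<and> g 0 = 0"

definition eISS_Lyapunov ::
  "(nat \<Rightarrow> nat) \<Rightarrow> (nat \<Rightarrow> nat) \<Rightarrow> (nat \<Rightarrow> vec \<Rightarrow> real) \<Rightarrow> (nat \<Rightarrow> vec \<Rightarrow> real)
   \<Rightarrow> (nat \<Rightarrow> seqv \<Rightarrow> seqv \<Rightarrow> vec) \<Rightarrow> seqv set \<Rightarrow> nat \<Rightarrow> (seqv \<Rightarrow> real) \<Rightarrow> bool" where
  "eISS_Lyapunov n p Nx Nu F A M V \<longleftrightarrow>
     (\<exists>wl wu b \<kappa> g. 0 < wl \<and> 0 < wu \<and> 0 < b \<and> 0 \<le> \<kappa> \<and> \<kappa> < 1 \<and> classK g \<and>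
       (\<forall>\<xi>\<in>seqspace n Nx. wl * distA Nx A \<xi> powr b \<le> V \<xi> \<and> V \<xi> \<le> wu * distA Nx A \<xi> powr b) \<and>
       (\<forall>\<xi>\<in>seqspace n Nx. \<forall>u\<in>inputs p Nu.
          V (traj F \<xi> u M) \<le> max (\<kappa> * V \<xi>) (g (inorm Nu u))))"

end

theory Submission
  imports Defs
begin

text \<open>
  Write d(k) = |x(k,\<xi>,u)|_A. The sandwich bounds give V(x(M)) \<le> wu d(M)^b, and by eISS
  either d(M) \<le> C \<rho>^M d(0) or d(M) \<le> \<gamma>(\<parallel>u\<parallel>). In the first case
  V(x(M)) \<le> wu C^b \<rho>^(M b) d(0)^b \<le> (wu C^b \<rho>^(M b) / wl) V(\<xi>), and the lower bound
  on M says precisely that wu C^b \<rho>^(M b) \<le> \<kappa> wl. In the second case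
  V(x(M)) \<le> wu \<gamma>(\<parallel>u\<parallel>)^b, and s \<mapsto> wu \<gamma>(s)^b is again of class K.
\<close>

lemma is_norm_on_nonneg:
  assumes "is_norm_on m N" "v \<in> Vec m"
  shows "0 \<le> N v"
  using assms by (simp add: is_norm_on_def)

lemma is_norm_on_diff_le:
  assumes N: "is_norm_on m N" and v: "v \<in> Vec m" and w: "w \<in> Vec m"
  shows "N (\<lambda>j. v j - w j) \<le> N v + N w"
proof -
  have minus_w: "(\<lambda>j. (-1) * w j) \<in> Vec m"
    using w by (simp add: Vec_def)
  have triangle: "N (\<lambda>j. v j + w' j) \<le> N v + N w'" if "w' \<in> Vec m" for w'
    using N v that unfolding is_norm_on_def by blast
  have "N (\<lambda>j. v j - w j) = N (\<lambda>j. v j + (-1) * w j)"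
    by simp
  also have "\<dots> \<le> N v + N (\<lambda>j. (-1) * w j)"
    by (rule triangle[OF minus_w])
  also have "N (\<lambda>j. (-1) * w j) = N w"
    using N w unfolding is_norm_on_def by (metis abs_neg_one mult_1)
  finally show ?thesis .
qed

lemma seqspace_diff:
  assumes norms: "\<forall>i. is_norm_on (d i) (N i)"
    and x: "x \<in> seqspace d N" and y: "y \<in> seqspace d N"
  shows "(\<lambda>i j. x i j - y i j) \<in> seqspace d N"
proof -
  have x_vec: "\<And>i. x i \<in> Vec (d i)" and y_vec: "\<And>i. y i \<in> Vec (d i)"
    using x y by (auto simp: seqspace_def)
  obtain Bx By where Bx: "\<And>i. N i (x i) \<le> Bx" and By: "\<And>i. N i (y i) \<le> By"
    using x y by (auto simp: seqspace_def bdd_above_def)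
  have "N i (\<lambda>j. x i j - y i j) \<le> Bx + By" for i
    using is_norm_on_diff_le[OF norms[rule_format] x_vec y_vec, of i] Bx[of i] By[of i] by linarith
  then show ?thesis
    using x_vec y_vec by (auto simp: seqspace_def Vec_def bdd_above_def)
qed

lemma supnorm_nonneg:
  assumes norms: "\<forall>i. is_norm_on (d i) (N i)" and x: "x \<in> seqspace d N"
  shows "0 \<le> supnorm N x"
proof -
  have "0 \<le> N 0 (x 0)"
    using x by (intro is_norm_on_nonneg[OF norms[rule_format]]) (simp add: seqspace_def)
  also have "\<dots> \<le> supnorm N x"
    using x unfolding supnorm_def seqspace_def by (auto intro: cSUP_upper)
  finally show ?thesis .
qed

lemma distA_nonneg:
  assumes norms: "\<forall>i. is_norm_on (d i) (N i)"
    and A_sub: "A \<subseteq> seqspace d N" and A_ne: "A \<noteq> {}" and x: "x \<in> seqspace d N"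
  shows "0 \<le> distA N A x"
  unfolding distA_def
  using A_sub by (intro cINF_greatest[OF A_ne] supnorm_nonneg[OF norms] seqspace_diff[OF norms x]) auto

lemma traj_in_seqspace:
  assumes "well_posed n p Nx Nu F" "\<xi> \<in> seqspace n Nx" "u \<in> inputs p Nu"
  shows "traj F \<xi> u k \<in> seqspace n Nx"
  using assms by (induction k) (auto simp: well_posed_def inputs_def)

lemma classK_nonneg:
  assumes g: "classK g" and s: "0 \<le> s"
  shows "0 \<le> g s"
proof (cases "s = 0")
  case False
  with s have "g 0 < g s"
    using g unfolding classK_def by (intro strict_mono_onD[where f = g]) auto
  then show ?thesis
    using g by (simp add: classK_def)
qed (use g in \<open>simp add: classK_def\<close>)

lemma classK_scaled_powr:
  assumes g: "classK g" and c: "0 < c" and b: "0 < b"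
  shows "classK (\<lambda>s. c * g s powr b)"
proof -
  have cont: "continuous_on {0..} g" and mono: "strict_mono_on {0..} g" and "g 0 = 0"
    using g by (auto simp: classK_def)
  have "continuous_on {0..} (\<lambda>s. c * g s powr b)"
    using b classK_nonneg[OF g]
    by (intro continuous_on_mult_left continuous_on_powr'[OF cont continuous_on_const]) auto
  moreover have "strict_mono_on {0..} (\<lambda>s. c * g s powr b)"
  proof (rule strict_mono_onI)
    fix r s :: real
    assume "r \<in> {0..}" "s \<in> {0..}" "r < s"
    then have "0 \<le> g r" "g r < g s"
      using classK_nonneg[OF g] strict_mono_onD[OF mono] by auto
    then show "c * g r powr b < c * g s powr b"
      using b c by (simp add: powr_less_mono2)
  qed
  ultimately show ?thesis
    using \<open>g 0 = 0\<close> b by (simp add: classK_def)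
qed

lemma power_powr_le_of_log_le:
  fixes \<rho> b q :: real and M :: nat
  assumes \<rho>: "0 < \<rho>" "\<rho> < 1" and b: "0 < b" and q: "0 < q"
    and M: "(1 / b) * log \<rho> q \<le> real M"
  shows "(\<rho> ^ M) powr b \<le> q"
proof -
  have "b * ln \<rho> < 0"
    using \<rho> b by (simp add: mult_pos_neg)
  with M have "real M * b * ln \<rho> \<le> ln q"
    by (simp add: log_def divide_le_eq mult.commute mult.left_commute)
  then have "exp (real M * b * ln \<rho>) \<le> q"
    using q by (metis exp_le_cancel_iff exp_ln)
  then show ?thesis
    using \<rho> by (simp add: powr_def powr_realpow[symmetric] powr_powr ac_simps)
qed

lemma decay_factor_le:
  fixes C \<rho> wl wu b \<kappa> :: real and M :: nat
  assumes \<rho>: "0 \<le> \<rho>" "\<rho> < 1" and C: "0 < C" and pos: "0 < wl" "0 < wu" "0 < b" "0 < \<kappa>"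
    and M: "1 \<le> M" "(1 / b) * log \<rho> (\<kappa> * wl / (C powr b * wu)) \<le> real M"
  shows "wu * (C * \<rho> ^ M) powr b \<le> \<kappa> * wl"
proof (cases "\<rho> = 0")
  case True
  \<comment> \<open>Here the bound on M is void (log 0 is junk), but 1 \<le> M makes \<rho> ^ M vanish.\<close>
  with M(1) pos show ?thesis by (simp add: power_0_left)
next
  case False
  with \<rho> have "(\<rho> ^ M) powr b \<le> \<kappa> * wl / (C powr b * wu)"
    using C pos M(2) by (intro power_powr_le_of_log_le) auto
  then have "wu * (C powr b * (\<rho> ^ M) powr b) \<le> \<kappa> * wl"
    using C pos by (simp add: field_simps)
  with C \<rho> show ?thesis
    by (simp add: powr_mult)
qed

lemma sandwich_decrease:
  fixes d d' V V' c g wl wu b \<kappa> :: real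
  assumes d: "0 \<le> d" "0 \<le> d'" and decay: "d' \<le> max (c * d) g"
    and c: "0 \<le> c" "wu * c powr b \<le> \<kappa> * wl"
    and V: "wl * d powr b \<le> V" "V' \<le> wu * d' powr b"
    and nonneg: "0 \<le> wu" "0 \<le> b" "0 \<le> \<kappa>"
  shows "V' \<le> max (\<kappa> * V) (wu * g powr b)"
proof (cases "d' \<le> c * d")
  case True
  have "V' \<le> wu * (c * d) powr b"
    using V(2) True d nonneg by (meson order_trans mult_left_mono powr_mono2)
  also have "\<dots> = wu * c powr b * d powr b"
    using c d by (simp add: powr_mult)
  also have "\<dots> \<le> \<kappa> * wl * d powr b"
    using c by (intro mult_right_mono) auto
  also have "\<dots> \<le> \<kappa> * V"
    using V(1) nonneg by (simp add: mult.assoc mult_left_mono)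
  finally show ?thesis by simp
next
  case False
  with decay have "d' \<le> g" by linarith
  then have "V' \<le> wu * g powr b"
    using V(2) d nonneg by (meson order_trans mult_left_mono powr_mono2)
  then show ?thesis by simp
qed

theorem proposition3:
  fixes n p :: "nat \<Rightarrow> nat" and Nx Nu :: "nat \<Rightarrow> vec \<Rightarrow> real"
    and I :: "nat \<Rightarrow> nat set" and F :: "nat \<Rightarrow> seqv \<Rightarrow> seqv \<Rightarrow> vec"
    and A :: "seqv set" and \<rho> C :: real and \<gamma> :: "real \<Rightarrow> real"
    and V :: "seqv \<Rightarrow> real" and wl wu b \<kappa> :: real
  assumes net: "network_data n p Nx Nu I F"
    and wp: "well_posed n p Nx Nu F"
    and A_sub: "A \<subseteq> seqspace n Nx" and A_ne: "A \<noteq> {}" and A_closed: "closed_in_X n Nx A"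
    and rho: "0 \<le> \<rho>" "\<rho> < 1" and C: "1 \<le> C" and gamma: "classK \<gamma>"
    and eISS: "\<forall>\<xi>\<in>seqspace n Nx. \<forall>u\<in>inputs p Nu. \<forall>k.
                 distA Nx A (traj F \<xi> u k) \<le> max (C * \<rho> ^ k * distA Nx A \<xi>) (\<gamma> (inorm Nu u))"
    and V_nonneg: "\<forall>\<xi>\<in>seqspace n Nx. 0 \<le> V \<xi>"
    and w: "0 < wl" "0 < wu" "0 < b"
    and V_bounds: "\<forall>\<xi>\<in>seqspace n Nx.
                     wl * distA Nx A \<xi> powr b \<le> V \<xi> \<and> V \<xi> \<le> wu * distA Nx A \<xi> powr b"
    and kappa: "0 < \<kappa>" "\<kappa> < 1"
  shows "(\<exists>M::nat. 1 \<le> M \<and>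
            (\<forall>\<xi>\<in>seqspace n Nx. \<forall>u\<in>inputs p Nu.
               V (traj F \<xi> u M) \<le> max (\<kappa> * V \<xi>) (wu * \<gamma> (inorm Nu u) powr b)))
      \<and> (\<forall>M::nat. 1 \<le> M \<and> real M \<ge> (1 / b) * log \<rho> (\<kappa> * wl / (C powr b * wu)) \<longrightarrow>
            (\<forall>\<xi>\<in>seqspace n Nx. \<forall>u\<in>inputs p Nu.
               V (traj F \<xi> u M) \<le> max (\<kappa> * V \<xi>) (wu * \<gamma> (inorm Nu u) powr b))
            \<and> eISS_Lyapunov n p Nx Nu F A M V)"
proof -
  let ?M_bound = "(1 / b) * log \<rho> (\<kappa> * wl / (C powr b * wu))"
  have norms: "\<forall>i. is_norm_on (n i) (Nx i)"
    using net by (simp add: network_data_def)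
  have decrease: "V (traj F \<xi> u M) \<le> max (\<kappa> * V \<xi>) (wu * \<gamma> (inorm Nu u) powr b)"
    if M: "1 \<le> M" "?M_bound \<le> real M" and \<xi>: "\<xi> \<in> seqspace n Nx" and u: "u \<in> inputs p Nu"
    for M \<xi> u
    using \<xi> u eISS V_bounds traj_in_seqspace[OF wp \<xi> u] rho C w kappa
      distA_nonneg[OF norms A_sub A_ne] decay_factor_le[OF rho _ w kappa(1) M]
    by (intro sandwich_decrease[where d = "distA Nx A \<xi>" and d' = "distA Nx A (traj F \<xi> u M)"
          and c = "C * \<rho> ^ M" and g = "\<gamma> (inorm Nu u)" and wl = wl]) auto
  define M0 where "M0 = max 1 (nat \<lceil>?M_bound\<rceil>)"
  have M0: "1 \<le> M0" "?M_bound \<le> real M0"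
    unfolding M0_def by (auto simp: le_max_iff_disj) linarith
  have Lyapunov: "eISS_Lyapunov n p Nx Nu F A M V" if "1 \<le> M" "?M_bound \<le> real M" for M
    unfolding eISS_Lyapunov_def
  proof (intro exI conjI)
    show "classK (\<lambda>s. wu * \<gamma> s powr b)"
      by (rule classK_scaled_powr[OF gamma w(2,3)])
  qed (use w kappa V_bounds decrease[OF that] in auto)
  show ?thesis
    using M0 decrease Lyapunov by blast
qed

end
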